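(* Let $G$ be a graph on $V$ whose adjacency matrix $A$ is invertible over $\mathbf F_2$, and let $G^R=P_V(G)$ be its retrograph, i.e. the graph on $V$ with adjacency matrix $A^{-1}$. Then: (a) $G^R$ is the unique graph $H$ on $V$ with $\mathcal R_0(H)=\{V\setminus S:S\in\mathcal R_0(G)\}$; (b) for every $W\subseteq V$, $W$ is reducible in $G$ if and only if $V\setminus W$ is reducible in $G^R$; (c) in that case $\Gamma_W(G)$ is nonsingular and $(\Gamma_W(G))^R=I_{V\setminus W}(G^R)$.
   Context: A graph means a finite simple graph in which loops are allowed, with adjacency matrix $A$ over $\mathbf F_2$ ($A_{vv}=1$ iff $v$ has a loop); a graph is nonsingular if its adjacency matrix is invertible over $\mathbf F_2$. $I_U(G)$ is the induced subgraph on $U$. Let $\mathcal V$ be the $\mathbf F_2$-space with basis $V$, $\mathcal E(x,y)=x^TAy$, $\langle W\rangle$ the span of $W$, $\langle W\rangle^{\perp\mathcal E}=\{x:\mathcal E(x,w)=0\ \forall w\in\langle W\rangle\}$; $W$ is reducible if $\langle W\rangle+\langle W\rangle^{\perp\mathcal E}=\mathcal V$; then $\mathcal E^W(x_1,x_2)=\mathcal E(x_1',x_2')$ with $x_i'\in\langle W\rangle^{\perp\mathcal E}$, $x_i-x_i'\in\langle W\rangle$, and $\Gamma_W(G)$ is the graph on $V\setminus W$ in which $v,w$ (possibly equal) are joined iff $\mathcal E^W(v,w)=1$. The pivotal poset $\mathcal R_0(G)$ is the set of reducible $W$ of nullity $0$, equivalently those with $A_{W,W}$ invertible. For a nonsingular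 graph $G$, its retrograph $G^R$ is the graph on the same vertex set with adjacency matrix $A^{-1}$ (the pivot of $G$ by its whole vertex set). *)

theory Defs
  imports Main
begin

text \<open>Vectors of the F2-space with basis V are encoded as subsets of V
(addition = symmetric difference); the span of W \<subseteq> V is Pow W.\<close>

definition graph :: "'a set \<Rightarrow> ('a \<Rightarrow> 'a \<Rightarrow> bool) \<Rightarrow> bool" where
  "graph V A \<longleftrightarrow> finite V \<and> (\<forall>u v. A u v \<longrightarrow> u \<in> V \<and> v \<in> V) \<and> (\<forall>u v. A u v \<longleftrightarrow> A v u)"

definition symdiff :: "'a set \<Rightarrow> 'a set \<Rightarrow> 'a set" where
  "symdiff x y = (x - y) \<union> (y - x)"

text \<open>Bilinear form E(x,y) = x^T A y over F2 (True = 1).\<close>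
definition bform :: "('a \<Rightarrow> 'a \<Rightarrow> bool) \<Rightarrow> 'a set \<Rightarrow> 'a set \<Rightarrow> bool" where
  "bform A x y \<longleftrightarrow> odd (card {(u, v). u \<in> x \<and> v \<in> y \<and> A u v})"

definition perp :: "'a set \<Rightarrow> ('a \<Rightarrow> 'a \<Rightarrow> bool) \<Rightarrow> 'a set \<Rightarrow> 'a set set" where
  "perp V A W = {x. x \<subseteq> V \<and> (\<forall>w \<in> Pow W. \<not> bform A x w)}"

definition reducible :: "'a set \<Rightarrow> ('a \<Rightarrow> 'a \<Rightarrow> bool) \<Rightarrow> 'a set \<Rightarrow> bool" where
  "reducible V A W \<longleftrightarrow> W \<subseteq> V \<and>
     (\<forall>x. x \<subseteq> V \<longrightarrow> (\<exists>a \<in> Pow W. \<exists>b \<in> perp V A W. x = symdiff a b))"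

definition EW :: "'a set \<Rightarrow> ('a \<Rightarrow> 'a \<Rightarrow> bool) \<Rightarrow> 'a set \<Rightarrow> 'a set \<Rightarrow> 'a set \<Rightarrow> bool" where
  "EW V A W x1 x2 = bform A
     (SOME y. y \<in> perp V A W \<and> symdiff x1 y \<subseteq> W)
     (SOME y. y \<in> perp V A W \<and> symdiff x2 y \<subseteq> W)"

definition Gamma :: "'a set \<Rightarrow> ('a \<Rightarrow> 'a \<Rightarrow> bool) \<Rightarrow> 'a set \<Rightarrow> ('a \<Rightarrow> 'a \<Rightarrow> bool)" where
  "Gamma V A W = (\<lambda>v w. v \<in> V - W \<and> w \<in> V - W \<and> EW V A W {v} {w})"

definition nullity_zero :: "'a set \<Rightarrow> ('a \<Rightarrow> 'a \<Rightarrow> bool) \<Rightarrow> 'a set \<Rightarrow> bool" where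
  "nullity_zero V A W \<longleftrightarrow> Pow W \<inter> perp V A W = {{}}"

definition R0 :: "'a set \<Rightarrow> ('a \<Rightarrow> 'a \<Rightarrow> bool) \<Rightarrow> 'a set set" where
  "R0 V A = {W. reducible V A W \<and> nullity_zero V A W}"

definition mmul :: "'a set \<Rightarrow> ('a \<Rightarrow> 'a \<Rightarrow> bool) \<Rightarrow> ('a \<Rightarrow> 'a \<Rightarrow> bool) \<Rightarrow> 'a \<Rightarrow> 'a \<Rightarrow> bool" where
  "mmul V A B u w \<longleftrightarrow> odd (card {v \<in> V. A u v \<and> B v w})"

definition is_inverse_on :: "'a set \<Rightarrow> ('a \<Rightarrow> 'a \<Rightarrow> bool) \<Rightarrow> ('a \<Rightarrow> 'a \<Rightarrow> bool) \<Rightarrow> bool" where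
  "is_inverse_on V A B \<longleftrightarrow> (\<forall>u v. B u v \<longrightarrow> u \<in> V \<and> v \<in> V) \<and>
     (\<forall>u \<in> V. \<forall>w \<in> V. mmul V A B u w = (u = w) \<and> mmul V B A u w = (u = w))"

definition nonsingular :: "'a set \<Rightarrow> ('a \<Rightarrow> 'a \<Rightarrow> bool) \<Rightarrow> bool" where
  "nonsingular V A \<longleftrightarrow> (\<exists>B. is_inverse_on V A B)"

definition retro :: "'a set \<Rightarrow> ('a \<Rightarrow> 'a \<Rightarrow> bool) \<Rightarrow> ('a \<Rightarrow> 'a \<Rightarrow> bool)" where
  "retro V A = (THE B. is_inverse_on V A B)"

definition induced :: "'a set \<Rightarrow> ('a \<Rightarrow> 'a \<Rightarrow> bool) \<Rightarrow> ('a \<Rightarrow> 'a \<Rightarrow> bool)" where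
  "induced U A = (\<lambda>u w. u \<in> U \<and> w \<in> U \<and> A u w)"

end

theory Submission
  imports Defs "HOL-Library.Z2"
begin

(* The central notion is nondeg_on A W: the block A_{W,W} is
   invertible, i.e. no nonzero x inside W has x^T A vanishing on W.

   First, for any graph, W has nullity zero iff nondeg_on A W, and then W is reducible;
   if A is nonsingular, reducibility conversely forces nondeg_on A W, so R_0(G) is the set
   of nondegenerate W. The key duality (a Schur-complement fact over F2) is that for
   B = A^{-1}, A_{W,W} is invertible iff B_{V-W,V-W} is; this gives (a) existence and (b).
   Uniqueness in (a) holds because R_0 determines a graph through its sets of size one
   and two. For (c) we show directly that the restriction of B to V-W is an inverse of the
   adjacency matrix of Gamma_W(G), using the representatives in the orthogonal complement
   that define the reduced form. *)

declare add_bit_eq_xor[simp del] mult_bit_eq_and[simp del]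


lemma bit_eq_iff_one: "(x::bit) = y \<longleftrightarrow> (x = 1 \<longleftrightarrow> y = 1)"
  by (cases x; cases y) auto

lemma bit_add_eq_0_iff: "(x::bit) + y = 0 \<longleftrightarrow> (x = 1 \<longleftrightarrow> y = 1)"
  by (cases x; cases y) auto

lemma of_nat_bit: "(of_nat n :: bit) = of_bool (odd n)"
  by (induction n) auto

lemma odd_card_sum:
  assumes "finite S"
  shows "odd (card {t\<in>S. P t}) \<longleftrightarrow> (\<Sum>t\<in>S. of_bool (P t) :: bit) = 1"
proof -
  have "(\<Sum>t\<in>S. of_bool (P t) :: bit) = (\<Sum>t\<in>{t\<in>S. P t}. 1)"
    using assms by (simp add: sum.inter_filter[symmetric] of_bool_def)
  also have "\<dots> = of_nat (card {t\<in>S. P t})" by simp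
  finally show ?thesis by (simp add: of_nat_bit)
qed

lemma sum_symdiff:
  fixes f :: "'a \<Rightarrow> bit"
  assumes "finite x" "finite y"
  shows "sum f (symdiff x y) = sum f x + sum f y"
proof -
  have x: "sum f x = sum f (x \<inter> y) + sum f (x - y)"
    by (rule sum.Int_Diff) (use assms in simp)
  have y: "sum f y = sum f (x \<inter> y) + sum f (y - x)"
    by (subst Int_commute) (rule sum.Int_Diff, use assms in simp)
  have "sum f (symdiff x y) = sum f (x - y) + sum f (y - x)"
    unfolding symdiff_def using assms by (intro sum.union_disjoint) auto
  then show ?thesis unfolding x y by (simp add: ac_simps)
qed

lemma symdiff_subset: "x \<subseteq> V \<Longrightarrow> y \<subseteq> V \<Longrightarrow> symdiff x y \<subseteq> V"
  unfolding symdiff_def by auto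


definition row_entry :: "('a \<Rightarrow> 'a \<Rightarrow> bool) \<Rightarrow> 'a set \<Rightarrow> 'a \<Rightarrow> bit" where
  "row_entry A x v = (\<Sum>u\<in>x. of_bool (A u v))"

definition bform_bit :: "('a \<Rightarrow> 'a \<Rightarrow> bool) \<Rightarrow> 'a set \<Rightarrow> 'a set \<Rightarrow> bit" where
  "bform_bit A x y = (\<Sum>v\<in>y. row_entry A x v)"

definition row_vec :: "'a set \<Rightarrow> ('a \<Rightarrow> 'a \<Rightarrow> bool) \<Rightarrow> 'a set \<Rightarrow> 'a set" where
  "row_vec V A x = {v\<in>V. row_entry A x v = 1}"

lemma bform_iff_bform_bit:
  assumes "finite x" "finite y"
  shows "bform A x y \<longleftrightarrow> bform_bit A x y = 1"
proof -
  have pairs: "{(u, v). u \<in> x \<and> v \<in> y \<and> A u v} = {p\<in>x \<times> y. A (fst p) (snd p)}" by auto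
  have "bform_bit A x y = (\<Sum>u\<in>x. \<Sum>v\<in>y. of_bool (A u v))"
    unfolding bform_bit_def row_entry_def by (rule sum.swap)
  also have "\<dots> = (\<Sum>p\<in>x \<times> y. of_bool (A (fst p) (snd p)))"
    by (simp add: sum.cartesian_product case_prod_beta)
  finally show ?thesis
    unfolding bform_def pairs using odd_card_sum[of "x \<times> y"] assms by simp
qed

lemma row_entry_single: "row_entry A {u} v = of_bool (A u v)"
  by (simp add: row_entry_def)

lemma row_entry_symdiff:
  "finite x \<Longrightarrow> finite y \<Longrightarrow> row_entry A (symdiff x y) v = row_entry A x v + row_entry A y v"
  unfolding row_entry_def by (rule sum_symdiff)

lemma bform_bit_symdiff:
  "finite y \<Longrightarrow> finite z \<Longrightarrow> bform_bit A x (symdiff y z) = bform_bit A x y + bform_bit A x z"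
  unfolding bform_bit_def by (rule sum_symdiff)

lemma bform_bit_single [simp]: "bform_bit A x {v} = row_entry A x v"
  unfolding bform_bit_def by simp

lemma bform_bit_zero: "(\<And>v. v \<in> y \<Longrightarrow> row_entry A x v = 0) \<Longrightarrow> bform_bit A x y = 0"
  unfolding bform_bit_def by (rule sum.neutral) blast

lemma bform_bit_sym:
  assumes "\<And>u v. A u v = A v u"
  shows "bform_bit A x y = bform_bit A y x"
proof -
  have "bform_bit A x y = (\<Sum>u\<in>x. \<Sum>v\<in>y. of_bool (A u v))"
    unfolding bform_bit_def row_entry_def by (rule sum.swap)
  also have "\<dots> = bform_bit A y x"
    unfolding bform_bit_def row_entry_def by (simp only: assms)
  finally show ?thesis .
qed

lemma bform_sym:
  assumes "\<And>u v. A u v = A v u"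
  shows "bform A x y = bform A y x"
proof -
  have "{(u, v). u \<in> x \<and> v \<in> y \<and> A u v} = prod.swap ` {(v, u). v \<in> y \<and> u \<in> x \<and> A v u}"
    using assms by auto
  then show ?thesis unfolding bform_def by (simp add: card_image)
qed

lemma mmul_sum:
  assumes "finite S"
  shows "(of_bool (mmul S X Y u w) :: bit) = (\<Sum>t\<in>S. of_bool (X u t) * of_bool (Y t w))"
proof -
  have "mmul S X Y u w \<longleftrightarrow> (\<Sum>t\<in>S. of_bool (X u t \<and> Y t w) :: bit) = 1"
    unfolding mmul_def by (rule odd_card_sum[OF assms])
  then show ?thesis by (subst bit_eq_iff_one) (simp add: of_bool_conj)
qed


lemma graph_finite: "graph V A \<Longrightarrow> finite V"
  unfolding graph_def by blast

lemma graph_sym: "graph V A \<Longrightarrow> A u v = A v u"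
  unfolding graph_def by blast

lemma graph_support: "graph V A \<Longrightarrow> A u v \<Longrightarrow> u \<in> V \<and> v \<in> V"
  unfolding graph_def by blast

lemma inverse_sym:
  "is_inverse_on V A B \<Longrightarrow> (\<And>u v. A u v \<Longrightarrow> u \<in> V \<and> v \<in> V) \<Longrightarrow> is_inverse_on V B A"
  unfolding is_inverse_on_def by blast

lemma row_entry_row_vec:
  assumes "finite V" "is_inverse_on V A B" "x \<subseteq> V" "w \<in> V"
  shows "row_entry B (row_vec V A x) w = of_bool (w \<in> x)"
proof -
  have fx: "finite x" using assms finite_subset by blast
  have "row_entry B (row_vec V A x) w = (\<Sum>v\<in>V. if row_entry A x v = 1 then of_bool (B v w) else 0)"
    unfolding row_entry_def[of B] row_vec_def by (rule sum.inter_filter[OF assms(1)])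
  also have "\<dots> = (\<Sum>v\<in>V. \<Sum>u\<in>x. of_bool (A u v) * of_bool (B v w))"
    unfolding row_entry_def[of A, symmetric] sum_distrib_right[symmetric]
    by (rule sum.cong) auto
  also have "\<dots> = (\<Sum>u\<in>x. of_bool (mmul V A B u w))"
    unfolding mmul_sum[OF assms(1)] by (rule sum.swap)
  also have "\<dots> = (\<Sum>u\<in>x. if u = w then 1 else 0)"
    using assms(2,3,4) unfolding is_inverse_on_def by (intro sum.cong) auto
  also have "\<dots> = of_bool (w \<in> x)" using fx by simp
  finally show ?thesis .
qed

lemma row_vec_empty [simp]: "row_vec V A {} = {}"
  by (simp add: row_vec_def row_entry_def)

lemma row_vec_inverse:
  assumes "finite V" "is_inverse_on V A B" "x \<subseteq> V"
  shows "row_vec V B (row_vec V A x) = x"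
  using row_entry_row_vec[OF assms] assms(3) unfolding row_vec_def by auto

text \<open>A matrix has at most one (two-sided) inverse: X = X(MY) = (XM)Y = Y.\<close>
lemma inverse_unique:
  assumes fS: "finite S" and X: "is_inverse_on S M X" and Y: "is_inverse_on S M Y"
  shows "X = Y"
proof (intro ext)
  fix u w
  show "X u w = Y u w"
  proof (cases "u \<in> S \<and> w \<in> S")
    case False then show ?thesis using X Y unfolding is_inverse_on_def by blast
  next
    case True
    have MY: "mmul S M Y t w = (t = w)" if "t \<in> S" for t
      using Y that True unfolding is_inverse_on_def by blast
    have XM: "mmul S X M u s = (u = s)" if "s \<in> S" for s
      using X that True unfolding is_inverse_on_def by blast
    have "(of_bool (X u w) :: bit) = (\<Sum>t\<in>S. of_bool (X u t) * of_bool (mmul S M Y t w))"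
      using True fS by (simp add: MY if_distrib cong: sum.cong)
    also have "\<dots> = (\<Sum>s\<in>S. \<Sum>t\<in>S. (of_bool (X u t) * of_bool (M t s)) * of_bool (Y s w))"
      by (simp only: mmul_sum[OF fS] sum_distrib_left mult.assoc) (rule sum.swap)
    also have "\<dots> = (\<Sum>s\<in>S. of_bool (mmul S X M u s) * of_bool (Y s w))"
      by (simp only: mmul_sum[OF fS] sum_distrib_right)
    also have "\<dots> = of_bool (Y u w)"
      using True fS by (simp add: XM if_distrib cong: sum.cong)
    finally show ?thesis by (subst (asm) bit_eq_iff_one) simp
  qed
qed

lemma retro_eq: "finite V \<Longrightarrow> is_inverse_on V A B \<Longrightarrow> retro V A = B"
  unfolding retro_def using inverse_unique by blast

lemma graph_inverse:
  assumes g: "graph V A" and inv: "is_inverse_on V A B"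
  shows "graph V B"
proof -
  have "{v\<in>V. A u v \<and> B w v} = {v\<in>V. B w v \<and> A v u}"
    "{v\<in>V. B v u \<and> A v w} = {v\<in>V. A w v \<and> B v u}" for u w
    using graph_sym[OF g] by blast+
  then have "mmul V A (\<lambda>u v. B v u) u w = mmul V B A w u"
    "mmul V (\<lambda>u v. B v u) A u w = mmul V A B w u" for u w
    unfolding mmul_def by simp_all
  then have "is_inverse_on V A (\<lambda>u v. B v u)"
    using inv unfolding is_inverse_on_def by auto
  then have "(\<lambda>u v. B v u) = B" using inverse_unique[OF graph_finite[OF g] _ inv] by blast
  then have "B u v = B v u" for u v by metis
  then show ?thesis using inv graph_finite[OF g] unfolding graph_def is_inverse_on_def by blast
qed


section \<open>Orthogonal complements, nullity and reducibility\<close>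

text \<open>The block A_{W,W} is invertible: no nonzero x inside W has x^T A vanishing on W.\<close>
definition nondeg_on :: "('a \<Rightarrow> 'a \<Rightarrow> bool) \<Rightarrow> 'a set \<Rightarrow> bool" where
  "nondeg_on A W \<longleftrightarrow> (\<forall>x\<subseteq>W. (\<forall>w\<in>W. row_entry A x w = 0) \<longrightarrow> x = {})"

lemma perp_iff:
  assumes fV: "finite V" and fW: "finite W"
  shows "x \<in> perp V A W \<longleftrightarrow> x \<subseteq> V \<and> (\<forall>w\<in>W. row_entry A x w = 0)"
proof
  assume h: "x \<in> perp V A W"
  then have xV: "x \<subseteq> V" by (simp add: perp_def)
  have fx: "finite x" using xV fV by (rule finite_subset)
  have "row_entry A x w = 0" if "w \<in> W" for w
  proof -
    have "\<not> bform A x {w}" using h that by (auto simp: perp_def)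
    then show ?thesis using bform_iff_bform_bit[OF fx, of "{w}"] by simp
  qed
  then show "x \<subseteq> V \<and> (\<forall>w\<in>W. row_entry A x w = 0)" using xV by blast
next
  assume h: "x \<subseteq> V \<and> (\<forall>w\<in>W. row_entry A x w = 0)"
  have fx: "finite x" using h fV finite_subset by blast
  have "\<not> bform A x w" if "w \<subseteq> W" for w
  proof -
    have "finite w" using that fW by (rule finite_subset)
    moreover have "bform_bit A x w = 0" using h that by (intro bform_bit_zero) blast
    ultimately show ?thesis using bform_iff_bform_bit[OF fx] by simp
  qed
  then show "x \<in> perp V A W" using h by (auto simp: perp_def)
qed

lemma nullity_zero_iff_nondeg:
  assumes fV: "finite V" and WV: "W \<subseteq> V"
  shows "nullity_zero V A W \<longleftrightarrow> nondeg_on A W"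
proof -
  have "finite W" using fV WV finite_subset by blast
  then have "Pow W \<inter> perp V A W = {x. x \<subseteq> W \<and> (\<forall>w\<in>W. row_entry A x w = 0)}"
    using perp_iff[OF fV] WV by blast
  moreover have "{} \<in> {x. x \<subseteq> W \<and> (\<forall>w\<in>W. row_entry A x w = 0)}"
    by (simp add: row_entry_def)
  ultimately show ?thesis unfolding nullity_zero_def nondeg_on_def by blast
qed

text \<open>If A_{W,W} is invertible, then every vector splits along span W and its complement:
  the map a \<mapsto> (a^T A)|_W is injective on the finite set Pow W, hence onto, so every x
  agrees on W with some a in span W, and x + a lies in the complement.\<close>
lemma nondeg_reducible:
  assumes fV: "finite V" and WV: "W \<subseteq> V" and nd: "nondeg_on A W"
  shows "reducible V A W"
proof -
  have fW: "finite W" using fV WV finite_subset by blast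
  define F where "F a = {w\<in>W. row_entry A a w = 1}" for a
  have F_eq: "F a = F a' \<longleftrightarrow> (\<forall>w\<in>W. row_entry A (symdiff a a') w = 0)"
    if "finite a" "finite a'" for a a'
  proof -
    have "row_entry A (symdiff a a') w = 0 \<longleftrightarrow> (row_entry A a w = 1 \<longleftrightarrow> row_entry A a' w = 1)"
      for w by (simp only: row_entry_symdiff[OF that] bit_add_eq_0_iff)
    then show ?thesis unfolding F_def set_eq_iff by blast
  qed
  have "inj_on F (Pow W)"
  proof (rule inj_onI)
    fix a a' assume a: "a \<in> Pow W" "a' \<in> Pow W" "F a = F a'"
    have "symdiff a a' \<subseteq> W" using a(1,2) by (intro symdiff_subset) auto
    moreover have "finite a" "finite a'" using a(1,2) fW finite_subset by auto
    ultimately have "symdiff a a' = {}" using nd F_eq a(3) unfolding nondeg_on_def by blast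
    then show "a = a'" unfolding symdiff_def by blast
  qed
  then have surj: "F ` Pow W = Pow W"
    by (intro endo_inj_surj) (use fW in \<open>auto simp: F_def\<close>)
  show ?thesis unfolding reducible_def
  proof (intro conjI allI impI)
    fix x assume xV: "x \<subseteq> V"
    have "F x \<in> Pow W" by (auto simp: F_def)
    then obtain a where a: "a \<subseteq> W" "F a = F x" using surj by (metis PowD imageE)
    have "finite a" "finite x" using a(1) xV fW fV finite_subset by auto
    then have "\<forall>w\<in>W. row_entry A (symdiff a x) w = 0" using F_eq a(2) by blast
    moreover have "symdiff a x \<subseteq> V" using a(1) xV WV by (intro symdiff_subset) auto
    ultimately have "symdiff a x \<in> perp V A W" using perp_iff[OF fV fW] by blast
    moreover have "x = symdiff a (symdiff a x)" unfolding symdiff_def by auto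
    ultimately show "\<exists>a\<in>Pow W. \<exists>b\<in>perp V A W. x = symdiff a b" using a(1) by blast
  qed (fact WV)
qed

text \<open>For nonsingular A, reducibility forces A_{W,W} to be invertible: a vector r in W
  orthogonal to W is orthogonal to span W + (span W)^perp = everything, so r^T A = 0.\<close>
lemma reducible_nondeg:
  assumes g: "graph V A" and inv: "is_inverse_on V A B" and red: "reducible V A W"
  shows "nondeg_on A W"
  unfolding nondeg_on_def
proof (intro allI impI)
  have fV: "finite V" using graph_finite[OF g] .
  have WV: "W \<subseteq> V" using red unfolding reducible_def by blast
  have fW: "finite W" using fV WV finite_subset by blast
  fix r assume r: "r \<subseteq> W" "\<forall>w\<in>W. row_entry A r w = 0"
  have "row_entry A r v = 0" if v: "v \<in> V" for v
  proof -
    obtain a b where ab: "a \<subseteq> W" "b \<in> perp V A W" "{v} = symdiff a b"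
      using red v unfolding reducible_def by blast
    have b: "b \<subseteq> V" "\<forall>w\<in>W. row_entry A b w = 0" using ab(2) perp_iff[OF fV fW] by auto
    have fab: "finite a" "finite b" using ab(1) b(1) fW fV finite_subset by auto
    have "row_entry A r v = bform_bit A r (symdiff a b)" by (simp flip: ab(3))
    also have "\<dots> = bform_bit A r a + bform_bit A b r"
      by (simp add: bform_bit_symdiff[OF fab] bform_bit_sym[OF graph_sym[OF g], where x = r and y = b])
    also have "bform_bit A r a = 0" by (rule bform_bit_zero) (use ab(1) r(2) in blast)
    also have "bform_bit A b r = 0" by (rule bform_bit_zero) (use b(2) r(1) in blast)
    finally show ?thesis by simp
  qed
  then have "row_vec V A r = {}" unfolding row_vec_def by auto
  then have "r = row_vec V B {}" using row_vec_inverse[OF fV inv, of r] r(1) WV by auto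
  then show "r = {}" by simp
qed

lemma reducible_iff_nondeg:
  assumes g: "graph V A" and inv: "is_inverse_on V A B" and WV: "W \<subseteq> V"
  shows "reducible V A W \<longleftrightarrow> nondeg_on A W"
  using reducible_nondeg[OF g inv] nondeg_reducible[OF graph_finite[OF g] WV] by blast

lemma R0_eq:
  assumes g: "graph V H"
  shows "R0 V H = {W. W \<subseteq> V \<and> nondeg_on H W}"
proof -
  have fV: "finite V" using graph_finite[OF g] .
  have "reducible V H W \<and> nullity_zero V H W \<longleftrightarrow> W \<subseteq> V \<and> nondeg_on H W" for W
  proof (cases "W \<subseteq> V")
    case True
    then show ?thesis
      using nullity_zero_iff_nondeg[OF fV True] nondeg_reducible[OF fV True] by blast
  next
    case False
    then show ?thesis unfolding reducible_def by blast
  qed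
  then show ?thesis unfolding R0_def by blast
qed


section \<open>Complementation under inversion\<close>

text \<open>A vector y in V-W with y^T B vanishing on V-W has z = y^T B inside W and
  z^T A = y, which vanishes on W; hence z = 0 and y = 0.\<close>
lemma nondeg_compl:
  assumes g: "graph V A" and inv: "is_inverse_on V A B" and WV: "W \<subseteq> V" and nd: "nondeg_on A W"
  shows "nondeg_on B (V - W)"
  unfolding nondeg_on_def
proof (intro allI impI)
  have fV: "finite V" using graph_finite[OF g] .
  have inv': "is_inverse_on V B A" using inverse_sym[OF inv] graph_support[OF g] by blast
  fix y assume y: "y \<subseteq> V - W" "\<forall>u\<in>V - W. row_entry B y u = 0"
  define z where "z = row_vec V B y"
  have zW: "z \<subseteq> W" using y(2) unfolding z_def row_vec_def by (auto dest: bspec)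
  have Az: "row_vec V A z = y" unfolding z_def using row_vec_inverse[OF fV inv'] y(1) by blast
  have "\<forall>w\<in>W. row_entry A z w = 0"
    using Az y(1) WV unfolding row_vec_def by auto
  then have "z = {}" using nd zW unfolding nondeg_on_def by blast
  then show "y = {}" using Az by simp
qed

text \<open>Applying the duality to B, whose inverse is A, gives the converse.\<close>
lemma nondeg_compl_iff:
  assumes g: "graph V A" and inv: "is_inverse_on V A B" and WV: "W \<subseteq> V"
  shows "nondeg_on A W \<longleftrightarrow> nondeg_on B (V - W)"
proof -
  have "graph V B" "is_inverse_on V B A"
    using graph_inverse[OF g inv] inverse_sym[OF inv] graph_support[OF g] by blast+
  moreover have "V - (V - W) = W" using WV by blast
  ultimately show ?thesis using nondeg_compl[OF g inv WV] nondeg_compl[of V B A "V - W"] by auto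
qed

lemma R0_inverse:
  assumes g: "graph V A" and inv: "is_inverse_on V A B"
  shows "R0 V B = (\<lambda>S. V - S) ` R0 V A"
proof (rule set_eqI)
  fix U
  have "U \<in> R0 V B \<longleftrightarrow> U \<subseteq> V \<and> V - U \<in> R0 V A"
    using nondeg_compl_iff[OF g inv, of "V - U"] double_diff[of U V V]
    unfolding R0_eq[OF g] R0_eq[OF graph_inverse[OF g inv]] by auto
  also have "\<dots> \<longleftrightarrow> U \<in> (\<lambda>S. V - S) ` R0 V A"
  proof
    assume "U \<subseteq> V \<and> V - U \<in> R0 V A"
    then show "U \<in> (\<lambda>S. V - S) ` R0 V A" by (intro image_eqI[of _ _ "V - U"]) auto
  next
    assume "U \<in> (\<lambda>S. V - S) ` R0 V A"
    then obtain S where "S \<in> R0 V A" "U = V - S" by blast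
    moreover have "S \<subseteq> V" using \<open>S \<in> R0 V A\<close> unfolding R0_eq[OF g] by blast
    ultimately show "U \<subseteq> V \<and> V - U \<in> R0 V A" by (simp add: double_diff)
  qed
  finally show "U \<in> R0 V B \<longleftrightarrow> U \<in> (\<lambda>S. V - S) ` R0 V A" .
qed

text \<open>Part (b): both sides mean that the corresponding block is invertible.\<close>
lemma reducible_compl_iff:
  assumes g: "graph V A" and inv: "is_inverse_on V A B" and WV: "W \<subseteq> V"
  shows "reducible V A W \<longleftrightarrow> reducible V B (V - W)"
proof -
  have "graph V B" "is_inverse_on V B A"
    using graph_inverse[OF g inv] inverse_sym[OF inv] graph_support[OF g] by blast+
  then show ?thesis
    using reducible_iff_nondeg[OF g inv WV] reducible_iff_nondeg[of V B A "V - W"]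
          nondeg_compl_iff[OF g inv WV] by blast
qed


section \<open>A graph is determined by its pivotal poset\<close>

lemma nondeg_single: "nondeg_on H {v} \<longleftrightarrow> H v v"
  unfolding nondeg_on_def by (auto simp: subset_singleton_iff row_entry_single)

lemma nondeg_pair:
  assumes uw: "u \<noteq> w" and sym: "H w u = H u w"
  shows "nondeg_on H {u, w} \<longleftrightarrow> ((H u u \<and> H w w) \<noteq> H u w)"
proof -
  have sub: "x \<subseteq> {u, w} \<longleftrightarrow> x = {} \<or> x = {u} \<or> x = {w} \<or> x = {u, w}" for x :: "'a set"
    by blast
  have "row_entry H {u, w} t = of_bool (H u t) + of_bool (H w t)" for t
    unfolding row_entry_def using uw by simp
  then show ?thesis
    unfolding nondeg_on_def sub using uw sym
    by (cases "H u u"; cases "H w w"; cases "H u w") (auto simp: row_entry_single)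
qed

text \<open>Diagonal entries are read off from singletons, the other entries from pairs.\<close>
lemma graph_determined_by_R0:
  assumes g: "graph V H" and g': "graph V H'" and R: "R0 V H = R0 V H'"
  shows "H = H'"
proof (intro ext)
  fix u w
  have nd: "nondeg_on H X \<longleftrightarrow> nondeg_on H' X" if "X \<subseteq> V" for X
    using R that unfolding R0_eq[OF g] R0_eq[OF g'] by blast
  show "H u w = H' u w"
  proof (cases "u \<in> V \<and> w \<in> V")
    case False then show ?thesis using graph_support[OF g] graph_support[OF g'] by blast
  next
    case True
    then have "nondeg_on H {u} = nondeg_on H' {u}" "nondeg_on H {w} = nondeg_on H' {w}"
      "nondeg_on H {u, w} = nondeg_on H' {u, w}" using nd by auto
    then show ?thesis
      using nondeg_pair[of u w H] nondeg_pair[of u w H'] graph_sym[OF g] graph_sym[OF g']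
      unfolding nondeg_single by (cases "u = w") auto
  qed
qed


section \<open>The reduced graph and its retrograph\<close>

definition perp_rep :: "'a set \<Rightarrow> ('a \<Rightarrow> 'a \<Rightarrow> bool) \<Rightarrow> 'a set \<Rightarrow> 'a set \<Rightarrow> 'a set" where
  "perp_rep V A W x = (SOME y. y \<in> perp V A W \<and> symdiff x y \<subseteq> W)"

lemma perp_rep_spec:
  assumes red: "reducible V A W" and xV: "x \<subseteq> V"
  shows "perp_rep V A W x \<in> perp V A W \<and> symdiff x (perp_rep V A W x) \<subseteq> W"
proof -
  obtain a b where ab: "a \<subseteq> W" "b \<in> perp V A W" "x = symdiff a b"
    using red xV unfolding reducible_def by blast
  then have "symdiff x b \<subseteq> W" unfolding symdiff_def by auto
  then have "\<exists>y. y \<in> perp V A W \<and> symdiff x y \<subseteq> W" using ab(2) by blast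
  then show ?thesis unfolding perp_rep_def by (rule someI_ex)
qed

lemma perp_rep_vertex:
  assumes fV: "finite V" and red: "reducible V A W" and v: "v \<in> V"
  shows "perp_rep V A W {v} \<subseteq> V" "\<forall>w\<in>W. row_entry A (perp_rep V A W {v}) w = 0"
    "symdiff {v} (perp_rep V A W {v}) \<subseteq> W"
proof -
  have "finite W" using red fV finite_subset unfolding reducible_def by blast
  then show "perp_rep V A W {v} \<subseteq> V" "\<forall>w\<in>W. row_entry A (perp_rep V A W {v}) w = 0"
    "symdiff {v} (perp_rep V A W {v}) \<subseteq> W"
    using perp_rep_spec[OF red, of "{v}"] perp_iff[OF fV] v by auto
qed

text \<open>An entry of Gamma_W(G) is an entry of the row vector of the representative of a vertex:
  the W-part of the other representative is orthogonal to it.\<close>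
lemma Gamma_row_entry:
  assumes g: "graph V A" and red: "reducible V A W" and t: "t \<in> V - W" and v: "v \<in> V - W"
  shows "Gamma V A W t v \<longleftrightarrow> row_entry A (perp_rep V A W {v}) t = 1"
proof -
  have fV: "finite V" using graph_finite[OF g] .
  have fW: "finite W" using red fV finite_subset unfolding reducible_def by blast
  let ?y = "\<lambda>s. perp_rep V A W {s}"
  note y = perp_rep_vertex[OF fV red]
  have fy: "finite (?y s)" if "s \<in> V" for s using y(1)[OF that] fV finite_subset by blast
  define a where "a = symdiff {t} (?y t)"
  have aW: "a \<subseteq> W" using y(3)[of t] t unfolding a_def by blast
  have fa: "finite a" using aW fW finite_subset by blast
  have yt: "?y t = symdiff {t} a" unfolding a_def symdiff_def by auto
  have "bform_bit A (?y t) (?y v) = bform_bit A (?y v) (?y t)"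
    using graph_sym[OF g] by (intro bform_bit_sym) blast
  also have "\<dots> = row_entry A (?y v) t + bform_bit A (?y v) a"
    unfolding yt using bform_bit_symdiff[OF _ fa] by simp
  also have "bform_bit A (?y v) a = 0"
    using y(2)[of v] v aW by (intro bform_bit_zero) auto
  finally show ?thesis
    using t v bform_iff_bform_bit[OF fy fy] unfolding Gamma_def EW_def perp_rep_def[symmetric]
    by auto
qed

lemma row_vec_perp_rep:
  assumes g: "graph V A" and red: "reducible V A W" and v: "v \<in> V - W"
  shows "row_vec V A (perp_rep V A W {v}) = {t\<in>V - W. Gamma V A W t v}"
proof -
  have "t \<in> row_vec V A (perp_rep V A W {v}) \<longleftrightarrow> t \<in> V - W \<and> Gamma V A W t v" for t
  proof (cases "t \<in> W")
    case True
    then show ?thesis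
      using perp_rep_vertex(2)[OF graph_finite[OF g] red, of v] v unfolding row_vec_def by auto
  next
    case False
    then show ?thesis using Gamma_row_entry[OF g red, of t v] v unfolding row_vec_def by auto
  qed
  then show ?thesis by blast
qed

lemma Gamma_sym:
  assumes "graph V A"
  shows "Gamma V A W t v = Gamma V A W v t"
proof -
  have "bform A x y = bform A y x" for x y by (rule bform_sym) (rule graph_sym[OF assms])
  then show ?thesis unfolding Gamma_def EW_def by blast
qed

text \<open>Part (c): the restriction of A^{-1} to V-W inverts the adjacency matrix of Gamma_W(G).
  Applying A^{-1} to the v-column y_v^T A of Gamma_W(G) returns y_v, whose trace on V-W is
  the basis vector v.\<close>
lemma Gamma_inverse:
  assumes g: "graph V A" and inv: "is_inverse_on V A B" and red: "reducible V A W"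
  shows "is_inverse_on (V - W) (Gamma V A W) (induced (V - W) B)"
proof -
  have fV: "finite V" using graph_finite[OF g] .
  define U where "U = V - W"
  have fU: "finite U" using fV U_def by simp
  let ?y = "\<lambda>v. perp_rep V A W {v}"
  note y = perp_rep_vertex[OF fV red]
  have key: "odd (card {t\<in>U. Gamma V A W t v \<and> B t u}) \<longleftrightarrow> u = v" if uv: "u \<in> U" "v \<in> U" for u v
  proof -
    have "u = v \<longleftrightarrow> u \<in> ?y v" using y(3)[of v] uv unfolding U_def symdiff_def by auto
    also have "\<dots> \<longleftrightarrow> u \<in> row_vec V B (row_vec V A (?y v))"
      using row_vec_inverse[OF fV inv y(1)] uv U_def by simp
    also have "\<dots> \<longleftrightarrow> u \<in> row_vec V B {t\<in>U. Gamma V A W t v}"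
      using row_vec_perp_rep[OF g red, of v] uv(2) U_def by simp
    also have "\<dots> \<longleftrightarrow> row_entry B {t\<in>U. Gamma V A W t v} u = 1"
      using uv unfolding row_vec_def U_def by simp
    also have "row_entry B {t\<in>U. Gamma V A W t v} u = (\<Sum>t\<in>U. of_bool (Gamma V A W t v \<and> B t u))"
      unfolding row_entry_def using fU
      by (simp add: sum.inter_filter[symmetric] of_bool_def if_distrib cong: if_cong)
    finally show ?thesis using odd_card_sum[OF fU] by simp
  qed
  show ?thesis unfolding is_inverse_on_def U_def[symmetric]
  proof (intro conjI ballI allI impI)
    fix u v assume "induced U B u v" then show "u \<in> U" "v \<in> U" unfolding induced_def by auto
  next
    fix u w assume uw: "u \<in> U" "w \<in> U"
    have "{v \<in> U. Gamma V A W u v \<and> induced U B v w} = {t\<in>U. Gamma V A W t u \<and> B t w}"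
      using uw Gamma_sym[OF g] unfolding induced_def by auto
    then show "mmul U (Gamma V A W) (induced U B) u w = (u = w)"
      unfolding mmul_def using key[OF uw(2,1)] by auto
    have "{v \<in> U. induced U B u v \<and> Gamma V A W v w} = {t\<in>U. Gamma V A W t w \<and> B t u}"
      using uw graph_sym[OF graph_inverse[OF g inv]] unfolding induced_def by auto
    then show "mmul U (induced U B) (Gamma V A W) u w = (u = w)"
      unfolding mmul_def using key[OF uw] by auto
  qed
qed


theorem mainTheorem19:
  fixes V :: "'a set" and A :: "'a \<Rightarrow> 'a \<Rightarrow> bool"
  assumes "graph V A" and "nonsingular V A"
  shows "(graph V (retro V A) \<and> R0 V (retro V A) = (\<lambda>S. V - S) ` R0 V A \<and>
          (\<forall>H. graph V H \<and> R0 V H = (\<lambda>S. V - S) ` R0 V A \<longrightarrow> H = retro V A))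
       \<and> (\<forall>W. W \<subseteq> V \<longrightarrow> (reducible V A W \<longleftrightarrow> reducible V (retro V A) (V - W)))
       \<and> (\<forall>W. W \<subseteq> V \<longrightarrow> reducible V A W \<longrightarrow>
            nonsingular (V - W) (Gamma V A W) \<and>
            retro (V - W) (Gamma V A W) = induced (V - W) (retro V A))"
proof -
  note g = assms(1)
  have fV: "finite V" using graph_finite[OF g] .
  obtain B where inv: "is_inverse_on V A B" using assms(2) nonsingular_def by blast
  have gB: "graph V B" using graph_inverse[OF g inv] .
  have RB: "R0 V B = (\<lambda>S. V - S) ` R0 V A" using R0_inverse[OF g inv] .
  have unique: "H = B" if "graph V H" "R0 V H = (\<lambda>S. V - S) ` R0 V A" for H
    using graph_determined_by_R0[OF that(1) gB] that(2) RB by simp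
  have reduced: "nonsingular (V - W) (Gamma V A W) \<and> retro (V - W) (Gamma V A W) = induced (V - W) B"
    if "reducible V A W" for W
    using Gamma_inverse[OF g inv that] retro_eq[of "V - W"] fV unfolding nonsingular_def by auto
  show ?thesis
    unfolding retro_eq[OF fV inv]
    using gB RB unique reducible_compl_iff[OF g inv] reduced by blast
qed

end
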